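(* Fix $d\in(0,\psi_{\max})$. For $\alpha\in(0,1-d/\varphi_{\max})$ define $$v_{\rm in}^*(\alpha,d)=\alpha\beta\gamma\left(s_{\rm in}-\varphi^{-1}\!\left(\frac{d}{1-\alpha}\right)\right),\qquad f_0^*(\alpha,d)=\frac{d\,\big(v_{\rm in}^*(\alpha,d)-\psi^{-1}(d)\big)}{\mu^{-1}(d)}.$$ Then $\alpha\mapsto f_0^*(\alpha,d)$ is strictly concave on $(0,1-d/\varphi_{\max})$.
   Context: All parameters $s_{\rm in},\gamma,\beta,\varphi_{\max},k_s,\rho_{\max},k_v,q_{\min},\mu_{\max}$ are strictly positive. $\varphi(s)=\frac{\varphi_{\max}s}{k_s+s}$, $\rho(v)=\frac{\rho_{\max}v}{k_v+v}$ on $[0,\infty)$, $\mu(q)=\mu_{\max}(1-q_{\min}/q)$ on $[q_{\min},\infty)$, with inverses $\varphi^{-1}:[0,\varphi_{\max})\to[0,\infty)$, $\mu^{-1}:[0,\mu_{\max})\to[q_{\min},\infty)$, $\rho^{-1}:[0,\rho_{\max})\to[0,\infty)$. $\psi_{\max}=\frac{\mu_{\max}\rho_{\max}}{\rho_{\max}+q_{\min}\mu_{\max}}$ and $\psi^{-1}(y)=\rho^{-1}(y\,\mu^{-1}(y))$ for $y\in[0,\psi_{\max})$. The quantity $f_0^*(\alpha,d)$ is the algal harvest rate $d\cdot c^*$ at the coexistence equilibrium of the consortium model under constant controls $(\alpha,d)$. *)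

theory Defs
  imports "HOL-Analysis.Analysis"
begin

definition phi :: "real \<Rightarrow> real \<Rightarrow> real \<Rightarrow> real" where
  "phi phimax ks s = phimax * s / (ks + s)"

definition phi_inv :: "real \<Rightarrow> real \<Rightarrow> real \<Rightarrow> real" where
  "phi_inv phimax ks y = ks * y / (phimax - y)"

definition rho :: "real \<Rightarrow> real \<Rightarrow> real \<Rightarrow> real" where
  "rho rhomax kv v = rhomax * v / (kv + v)"

definition rho_inv :: "real \<Rightarrow> real \<Rightarrow> real \<Rightarrow> real" where
  "rho_inv rhomax kv y = kv * y / (rhomax - y)"

definition mu :: "real \<Rightarrow> real \<Rightarrow> real \<Rightarrow> real" where
  "mu mumax qmin q = mumax * (1 - qmin / q)"

definition mu_inv :: "real \<Rightarrow> real \<Rightarrow> real \<Rightarrow> real" where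
  "mu_inv mumax qmin y = mumax * qmin / (mumax - y)"

definition psi_max :: "real \<Rightarrow> real \<Rightarrow> real \<Rightarrow> real" where
  "psi_max mumax rhomax qmin = mumax * rhomax / (rhomax + qmin * mumax)"

definition psi_inv :: "real \<Rightarrow> real \<Rightarrow> real \<Rightarrow> real \<Rightarrow> real \<Rightarrow> real" where
  "psi_inv rhomax kv mumax qmin y = rho_inv rhomax kv (y * mu_inv mumax qmin y)"

definition v_in_star :: "real \<Rightarrow> real \<Rightarrow> real \<Rightarrow> real \<Rightarrow> real \<Rightarrow> real \<Rightarrow> real \<Rightarrow> real" where
  "v_in_star s_in beta gamma phimax ks alpha d =
     alpha * beta * gamma * (s_in - phi_inv phimax ks (d / (1 - alpha)))"

definition f0_star :: "real \<Rightarrow> real \<Rightarrow> real \<Rightarrow> real \<Rightarrow> real \<Rightarrow> real \<Rightarrow> real \<Rightarrow> real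
    \<Rightarrow> real \<Rightarrow> real \<Rightarrow> real \<Rightarrow> real" where
  "f0_star s_in beta gamma phimax ks rhomax kv mumax qmin alpha d =
     d * (v_in_star s_in beta gamma phimax ks alpha d - psi_inv rhomax kv mumax qmin d)
       / mu_inv mumax qmin d"

definition strictly_concave_on :: "real set \<Rightarrow> (real \<Rightarrow> real) \<Rightarrow> bool" where
  "strictly_concave_on S f \<longleftrightarrow>
     (\<forall>x\<in>S. \<forall>y\<in>S. x \<noteq> y \<longrightarrow> (\<forall>t::real. 0 < t \<and> t < 1 \<longrightarrow>
        f ((1 - t) * x + t * y) > (1 - t) * f x + t * f y))"

end

theory Submission
  imports Defs
begin

text \<open>Writing \<open>w(\<alpha>) = \<phi>\<^sub>m\<^sub>a\<^sub>x(1 - \<alpha>) - d\<close>, one has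
  \<open>\<phi>\<^sup>-\<^sup>1(d/(1-\<alpha>)) = k\<^sub>s d / w(\<alpha>)\<close>, and eliminating \<open>\<alpha>\<close> from the product
  \<open>\<alpha> \<phi>\<^sup>-\<^sup>1(d/(1-\<alpha>))\<close> shows that \<open>f\<^sub>0\<^sup>*\<close> is an affine function of \<open>\<alpha>\<close> minus
  \<open>K / w(\<alpha>)\<close> with \<open>K > 0\<close>. Since \<open>w\<close> is affine, positive and non-constant on the
  interval and \<open>1/w\<close> is strictly convex on \<open>(0,\<infinity>)\<close>, strict concavity follows.\<close>

lemma inverse_convex_combination_less:
  fixes w1 w2 t :: real
  assumes "0 < w1" "0 < w2" "w1 \<noteq> w2" "0 < t" "t < 1"
  shows "1 / ((1 - t) * w1 + t * w2) < (1 - t) / w1 + t / w2"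
proof -
  have pos: "0 < (1 - t) * w1 + t * w2"
    using assms by (simp add: add_pos_pos)
  have "((1 - t) / w1 + t / w2) * ((1 - t) * w1 + t * w2) - 1
      = (1 - t) * t * (w1 - w2)^2 / (w1 * w2)"
    using assms by (simp add: field_simps power2_eq_square)
  also have "\<dots> > 0"
    using assms by simp
  finally show ?thesis
    using pos by (simp add: divide_less_eq)
qed

lemma strictly_concave_on_cong:
  assumes "convex S" "\<And>x. x \<in> S \<Longrightarrow> f x = g x"
  shows "strictly_concave_on S f \<longleftrightarrow> strictly_concave_on S g"
proof -
  have "(1 - t) * x + t * y \<in> S" if "x \<in> S" "y \<in> S" "0 < t" "t < 1" for x y t
    using convexD[OF \<open>convex S\<close> that(1,2), of "1 - t" t] that by simp
  then show ?thesis
    unfolding strictly_concave_on_def using assms(2) by auto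
qed

lemma strictly_concave_on_affine_minus_reciprocal:
  fixes A B K p q :: real
  assumes "convex S" "0 < K" "p \<noteq> 0" "\<And>a. a \<in> S \<Longrightarrow> 0 < p * a + q"
  shows "strictly_concave_on S (\<lambda>a. A * a + B - K / (p * a + q))"
  unfolding strictly_concave_on_def
proof (intro ballI impI allI)
  fix x y t :: real
  assume "x \<in> S" "y \<in> S" "x \<noteq> y" and t: "0 < t \<and> t < 1"
  have "p * x + q \<noteq> p * y + q"
    using \<open>x \<noteq> y\<close> \<open>p \<noteq> 0\<close> by simp
  then have "1 / ((1 - t) * (p * x + q) + t * (p * y + q))
      < (1 - t) / (p * x + q) + t / (p * y + q)"
    using inverse_convex_combination_less assms(4) \<open>x \<in> S\<close> \<open>y \<in> S\<close> t by blast
  moreover have "(1 - t) * (p * x + q) + t * (p * y + q) = p * ((1 - t) * x + t * y) + q"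
    by (simp add: algebra_simps)
  ultimately have "1 / (p * ((1 - t) * x + t * y) + q)
      < (1 - t) / (p * x + q) + t / (p * y + q)"
    by simp
  from mult_strict_left_mono[OF this \<open>0 < K\<close>]
  have "K / (p * ((1 - t) * x + t * y) + q) < (1 - t) * (K / (p * x + q)) + t * (K / (p * y + q))"
    by (simp add: algebra_simps)
  then show "A * ((1 - t) * x + t * y) + B - K / (p * ((1 - t) * x + t * y) + q)
      > (1 - t) * (A * x + B - K / (p * x + q)) + t * (A * y + B - K / (p * y + q))"
    by (simp add: algebra_simps)
qed

lemma phi_inv_div_one_minus:
  assumes "a \<noteq> 1"
  shows "phi_inv phimax ks (d / (1 - a)) = ks * d / (phimax * (1 - a) - d)"
proof -
  have "phimax - d / (1 - a) = (phimax * (1 - a) - d) / (1 - a)"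
    using assms by (simp add: field_simps)
  moreover have "ks * (d / (1 - a)) / (w / (1 - a)) = ks * d / w" for w
    using assms by simp
  ultimately show ?thesis
    unfolding phi_inv_def using assms by simp
qed

lemma f0_star_affine_minus_reciprocal:
  assumes "C = d / mu_inv mumax qmin d" "0 < d" "0 < - phimax * a + (phimax - d)"
  shows "f0_star s_in beta gamma phimax ks rhomax kv mumax qmin a d
    = C * beta * gamma * s_in * a
      + C * (beta * gamma * ks * d / phimax - psi_inv rhomax kv mumax qmin d)
      - C * beta * gamma * ks * d * (phimax - d) / phimax / (- phimax * a + (phimax - d))"
proof -
  define w where "w = phimax * (1 - a) - d"
  define P where "P = psi_inv rhomax kv mumax qmin d"
  have "w \<noteq> 0" "a \<noteq> 1" "phimax \<noteq> 0"
    using assms(2,3) unfolding w_def by (auto simp: algebra_simps)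
  have alpha_times: "a * (ks * d / w) = ks * d * (phimax - d) / phimax / w - ks * d / phimax"
  proof -
    have "a = ((phimax - d) - w) / phimax"
      using \<open>phimax \<noteq> 0\<close> unfolding w_def by (simp add: field_simps)
    also have "\<dots> * (ks * d / w) = ks * d * (phimax - d) / phimax / w - ks * d / phimax"
      using \<open>phimax \<noteq> 0\<close> \<open>w \<noteq> 0\<close> by (simp add: field_simps)
    finally show ?thesis .
  qed
  have "f0_star s_in beta gamma phimax ks rhomax kv mumax qmin a d
    = C * (a * beta * gamma * (s_in - ks * d / w) - P)"
    unfolding f0_star_def v_in_star_def phi_inv_div_one_minus[OF \<open>a \<noteq> 1\<close>] assms(1)
      w_def[symmetric] P_def
    by simp
  also have "\<dots> = C * (beta * gamma * s_in * a - beta * gamma * (a * (ks * d / w)) - P)"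
    by (simp add: algebra_simps)
  also have "\<dots> = C * beta * gamma * s_in * a + C * (beta * gamma * ks * d / phimax - P)
      - C * beta * gamma * ks * d * (phimax - d) / phimax / w"
    unfolding alpha_times by (simp add: algebra_simps)
  also have "w = - phimax * a + (phimax - d)"
    unfolding w_def by (simp add: algebra_simps)
  finally show ?thesis
    unfolding P_def .
qed

lemma psi_max_less_mumax:
  assumes "0 < mumax" "0 < rhomax" "0 < qmin"
  shows "psi_max mumax rhomax qmin < mumax"
  using assms unfolding psi_max_def by (simp add: divide_less_eq)

theorem lemma1:
  fixes s_in gamma beta phimax ks rhomax kv qmin mumax d :: real
  assumes "s_in > 0" "gamma > 0" "beta > 0" "phimax > 0" "ks > 0"
    "rhomax > 0" "kv > 0" "qmin > 0" "mumax > 0"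
    and "0 < d" "d < psi_max mumax rhomax qmin"
  shows "strictly_concave_on {0<..<1 - d / phimax}
           (\<lambda>alpha. f0_star s_in beta gamma phimax ks rhomax kv mumax qmin alpha d)"
proof (cases "d < phimax")
  case False
  then have "{0<..<1 - d / phimax} = {}"
    using assms by (auto simp: field_simps)
  then show ?thesis
    unfolding strictly_concave_on_def by blast
next
  case True
  define C where "C = d / mu_inv mumax qmin d"
  define K where "K = C * beta * gamma * ks * d * (phimax - d) / phimax"
  have "d < mumax"
    using psi_max_less_mumax assms by (meson less_trans)
  then have "0 < K"
    unfolding K_def C_def mu_inv_def using True assms by simp
  have w_pos: "0 < - phimax * a + (phimax - d)" if "a \<in> {0<..<1 - d / phimax}" for a
    using that assms by (simp add: field_simps)
  have "f0_star s_in beta gamma phimax ks rhomax kv mumax qmin a d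
      = C * beta * gamma * s_in * a
        + C * (beta * gamma * ks * d / phimax - psi_inv rhomax kv mumax qmin d)
        - K / (- phimax * a + (phimax - d))"
    if "a \<in> {0<..<1 - d / phimax}" for a
    unfolding K_def using f0_star_affine_minus_reciprocal[OF C_def] w_pos[OF that] assms by simp
  then have "strictly_concave_on {0<..<1 - d / phimax}
      (\<lambda>a. f0_star s_in beta gamma phimax ks rhomax kv mumax qmin a d)
    \<longleftrightarrow> strictly_concave_on {0<..<1 - d / phimax} (\<lambda>a. C * beta * gamma * s_in * a
        + C * (beta * gamma * ks * d / phimax - psi_inv rhomax kv mumax qmin d)
        - K / (- phimax * a + (phimax - d)))"
    by (intro strictly_concave_on_cong) simp_all
  also have "\<dots>"
    by (rule strictly_concave_on_affine_minus_reciprocal[OF _ \<open>0 < K\<close>])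
      (use w_pos assms in simp_all)
  finally show ?thesis .
qed

end
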